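(* Let $K\subset\mathbb{R}^n$ be a closed set, $\alpha>0$, $\gamma:[0,1]\to(K^{\oplus\alpha})^c$ a rectifiable path of length $L(\gamma)$ and $T\ge0$. Then the pushed path $\gamma^{[T]}$ is rectifiable and its length satisfies $$L\big(\gamma^{[T]}\big)\le 2T+L(\gamma)\,e^{T/\alpha}.$$
   Context: $R_K(x)=d(x,K)$; $\Theta_K(x)=\{y\in K:\|x-y\|=R_K(x)\}$; for bounded $S$, $\mathrm{center}(S)$ is the center of the smallest ball enclosing $S$; for $x\notin K$, $\nabla_K(x)=(x-\mathrm{center}(\Theta_K(x)))/R_K(x)$. $\Phi_K:[0,\infty)\times K^c\to K^c$ is the flow of $\nabla_K$: the continuous (locally Lipschitz) semiflow with $\Phi_K(0,x)=x$, $\Phi_K(t_1,\Phi_K(t_2,x))=\Phi_K(t_1+t_2,x)$ and right derivative $\frac{d}{dt^+}\Phi_K(t,x)=\nabla_K(\Phi_K(t,x))$. $K^{\oplus\alpha}=\{x:d(x,K)\le\alpha\}$. For a rectifiable path $\gamma:[0,1]\to K^c$ and $T\ge0$, the pushed path $\gamma^{[T]}:[0,1]\to K^c$ from $\gamma(0)$ to $\gamma(1)$ is defined by $\gamma^{[T]}(t)=\Phi_K(3tT,\gamma(0))$ for $t\in[0,1/3]$, $\gamma^{[T]}(t)=\Phi_K(T,\gamma(3t-1))$ for $t\in[1/3,2/3]$, and $\gamma^{[T]}(t)=\Phi_K(3(1-t)T,\gamma(1))$ for $t\in[2/3,1]$. *)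

theory Defs
  imports "HOL-Analysis.Analysis"
begin

definition distK :: "'a::euclidean_space set \<Rightarrow> 'a \<Rightarrow> real" where
  "distK K x = infdist x K"

definition ThetaK :: "'a::euclidean_space set \<Rightarrow> 'a \<Rightarrow> 'a set" where
  "ThetaK K x = {y \<in> K. dist x y = distK K x}"

definition encl_radius :: "'a::euclidean_space set \<Rightarrow> 'a \<Rightarrow> real" where
  "encl_radius S c = (SUP y\<in>S. dist c y)"

definition center :: "'a::euclidean_space set \<Rightarrow> 'a" where
  "center S = (SOME c. \<forall>c'. encl_radius S c \<le> encl_radius S c')"

definition gradK :: "'a::euclidean_space set \<Rightarrow> 'a \<Rightarrow> 'a" where
  "gradK K x = (1 / distK K x) *\<^sub>R (x - center (ThetaK K x))"

definition offset :: "'a::euclidean_space set \<Rightarrow> real \<Rightarrow> 'a set" where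
  "offset K a = {x. distK K x \<le> a}"

definition is_flowK :: "'a::euclidean_space set \<Rightarrow> (real \<Rightarrow> 'a \<Rightarrow> 'a) \<Rightarrow> bool" where
  "is_flowK K Phi \<longleftrightarrow>
     (\<forall>x. x \<notin> K \<longrightarrow> Phi 0 x = x) \<and>
     (\<forall>t x. t \<ge> 0 \<longrightarrow> x \<notin> K \<longrightarrow> Phi t x \<notin> K) \<and>
     (\<forall>t1 t2 x. t1 \<ge> 0 \<longrightarrow> t2 \<ge> 0 \<longrightarrow> x \<notin> K \<longrightarrow> Phi t1 (Phi t2 x) = Phi (t1 + t2) x) \<and>
     continuous_on ({0..} \<times> (- K)) (\<lambda>(t, x). Phi t x) \<and>
     local_lipschitz {0..} (- K) Phi \<and>
     (\<forall>t x. t \<ge> 0 \<longrightarrow> x \<notin> K \<longrightarrow>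
        ((\<lambda>s. Phi s x) has_vector_derivative gradK K (Phi t x)) (at t within {t..}))"

definition chord_sums :: "(real \<Rightarrow> 'a::euclidean_space) \<Rightarrow> real set" where
  "chord_sums g = {(\<Sum>i<k. dist (g (t i)) (g (t (Suc i)))) | t k.
      t 0 = 0 \<and> t k = 1 \<and> (\<forall>i<k. t i \<le> t (Suc i))}"

definition rectifiable_path :: "(real \<Rightarrow> 'a::euclidean_space) \<Rightarrow> bool" where
  "rectifiable_path g \<longleftrightarrow> path g \<and> bdd_above (chord_sums g)"

definition path_length :: "(real \<Rightarrow> 'a::euclidean_space) \<Rightarrow> real" where
  "path_length g = Sup (chord_sums g)"

definition pushed_path :: "(real \<Rightarrow> 'a \<Rightarrow> 'a) \<Rightarrow> real \<Rightarrow> (real \<Rightarrow> 'a) \<Rightarrow> real \<Rightarrow> 'a" where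
  "pushed_path Phi T g t =
     (if t \<le> 1/3 then Phi (3 * t * T) (g 0)
      else if t \<le> 2/3 then Phi T (g (3 * t - 1))
      else Phi (3 * (1 - t) * T) (g 1))"

end

theory Submission
  imports Defs
begin

(* The two outer thirds of the pushed path are flow lines of a field of norm at most 1, so each
   has length at most T.  The middle third is the image of gamma under Phi_K(T, .), and the point
   is that this map is e^(T/alpha)-Lipschitz on {R_K >= alpha}: the semiconcavity inequality
   R_K(y)^2 <= R_K(x)^2 + 2 <x - center(Theta_K(x)), y - x> + |y - x|^2 makes nabla_K one-sided
   Lipschitz there, <nabla_K x - nabla_K y, x - y> <= |x - y|^2 / alpha, and since R_K does not
   decrease along the flow, a Gronwall argument on e^(-2t/alpha) |Phi_K(t,x) - Phi_K(t,y)|^2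
   applies.  Lengths are then bounded by a control function V with d(p s, p t) <= V t - V s. *)

lemma right_dini_le_linear:
  fixes f :: "real \<Rightarrow> real"
  assumes ab: "a \<le> b" and cont: "continuous_on {a..b} f"
    and step: "\<And>s. s \<in> {a..<b} \<Longrightarrow>
        \<exists>d>0. \<forall>y. s < y \<and> y < s + d \<and> y \<le> b \<longrightarrow> f y \<le> f s + c * (y - s)"
  shows "f b \<le> f a + c * (b - a)"
proof -
  define P where "P = {y\<in>{a..b}. f y \<le> f a + c * (y - a)}"
  define S where "S = {x\<in>{a..b}. {a..x} \<subseteq> P}"
  define m where "m = Sup S"
  have aS: "a \<in> S" using ab by (auto simp: S_def P_def)
  have bdd: "bdd_above S" by (auto simp: S_def bdd_above_def)
  have am: "a \<le> m" using aS bdd by (simp add: m_def cSup_upper)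
  have mb: "m \<le> b" using aS by (auto simp: m_def S_def intro!: cSup_least)
  have "closed P" unfolding P_def
    by (rule continuous_on_closed_Collect_le[OF cont]) (auto intro!: continuous_intros)
  have "{a..<m} \<subseteq> P"
  proof
    fix y assume y: "y \<in> {a..<m}"
    then obtain x where "x \<in> S" "y < x" using less_cSup_iff[OF _ bdd] aS by (auto simp: m_def)
    then show "y \<in> P" using y by (auto simp: S_def)
  qed
  then have mP: "{a..m} \<subseteq> P"
    using am mb \<open>closed P\<close> closure_minimal[of "{a..<m}" P] by (cases "a = m") (auto simp: P_def)
  have "m = b"
  proof (rule ccontr)
    assume "m \<noteq> b"
    then obtain d where d: "d > 0" "\<forall>y. m < y \<and> y < m + d \<and> y \<le> b \<longrightarrow> f y \<le> f m + c * (y - m)"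
      using step[of m] mb am by force
    define x where "x = min b (m + d/2)"
    have mx: "m < x" using \<open>m \<noteq> b\<close> mb d by (simp add: x_def)
    have "{a..x} \<subseteq> P"
    proof
      fix y assume y: "y \<in> {a..x}"
      show "y \<in> P"
      proof (cases "y \<le> m")
        case False
        then have "f y \<le> f m + c * (y - m)" using d y by (auto simp: x_def)
        moreover have "f m \<le> f a + c * (m - a)" using mP am by (auto simp: P_def)
        ultimately show ?thesis using y am mx by (auto simp: P_def x_def algebra_simps)
      qed (use mP y in auto)
    qed
    then have "x \<in> S" using am mx by (auto simp: S_def x_def)
    then show False using bdd mx by (simp add: m_def cSup_upper leD)
  qed
  then show ?thesis using mP ab by (auto simp: P_def)
qed

lemma right_dini_le:
  fixes f :: "real \<Rightarrow> real"
  assumes "a \<le> b" and "continuous_on {a..b} f"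
    and "\<And>s e. s \<in> {a..<b} \<Longrightarrow> e > 0 \<Longrightarrow>
        \<exists>d>0. \<forall>y. s < y \<and> y < s + d \<and> y \<le> b \<longrightarrow> f y \<le> f s + e * (y - s)"
  shows "f b \<le> f a"
proof (rule field_le_epsilon)
  fix e :: real assume "e > 0"
  define c where "c = e / (b - a + 1)"
  have "c > 0" using \<open>e > 0\<close> assms(1) by (simp add: c_def)
  then have "f b \<le> f a + c * (b - a)" using assms by (intro right_dini_le_linear) auto
  also have "c * (b - a) \<le> e" using \<open>e > 0\<close> assms(1) by (simp add: c_def field_simps)
  finally show "f b \<le> f a + e" by simp
qed

lemma has_vector_derivative_right_approx:
  fixes f :: "real \<Rightarrow> 'a::real_normed_vector"
  assumes "(f has_vector_derivative v) (at t within {t..})" and "e > 0"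
  obtains d where "d > 0"
    and "\<And>y. t < y \<Longrightarrow> y < t + d \<Longrightarrow> norm (f y - f t - (y - t) *\<^sub>R v) \<le> e * (y - t)"
proof -
  have "(f has_derivative (\<lambda>h. h *\<^sub>R v)) (at t within {t..})"
    using assms(1) by (simp add: has_vector_derivative_def)
  then obtain d where "d > 0" and d: "\<forall>y\<in>{t..}. norm (y - t) < d \<longrightarrow>
      norm (f y - f t - (y - t) *\<^sub>R v) \<le> e * norm (y - t)"
    using assms(2) unfolding has_derivative_within_alt by blast
  show ?thesis by (rule that[OF \<open>d > 0\<close>]) (use d in auto)
qed

lemma right_derivative_nonpos_le:
  fixes f :: "real \<Rightarrow> real"
  assumes "a \<le> b" and "continuous_on {a..b} f"
    and "\<And>s. s \<in> {a..<b} \<Longrightarrow> (f has_real_derivative f' s) (at s within {s..})"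
    and "\<And>s. s \<in> {a..<b} \<Longrightarrow> f' s \<le> 0"
  shows "f b \<le> f a"
proof (rule right_dini_le[OF assms(1,2)])
  fix s e :: real assume s: "s \<in> {a..<b}" and "e > 0"
  have deriv: "(f has_vector_derivative f' s) (at s within {s..})"
    using assms(3)[OF s] by (simp add: has_real_derivative_iff_has_vector_derivative)
  obtain d where "d > 0"
    and d: "\<And>y. s < y \<Longrightarrow> y < s + d \<Longrightarrow> norm (f y - f s - (y - s) * f' s) \<le> e * (y - s)"
    using has_vector_derivative_right_approx[OF deriv \<open>e > 0\<close>] by auto
  have "f y \<le> f s + e * (y - s)" if "s < y" "y < s + d" for y
    using d[OF that] assms(4)[OF s] that mult_nonneg_nonpos[of "y - s" "f' s"] by auto
  then show "\<exists>d>0. \<forall>y. s < y \<and> y < s + d \<and> y \<le> b \<longrightarrow> f y \<le> f s + e * (y - s)"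
    using \<open>d > 0\<close> by blast
qed

lemma dist_le_exp_of_one_sided_lipschitz:
  fixes x y :: "real \<Rightarrow> 'a::real_inner"
  assumes t: "0 \<le> t"
    and cont: "continuous_on {0..t} x" "continuous_on {0..t} y"
    and dx: "\<And>r. r \<in> {0..<t} \<Longrightarrow> (x has_vector_derivative x' r) (at r within {r..})"
    and dy: "\<And>r. r \<in> {0..<t} \<Longrightarrow> (y has_vector_derivative y' r) (at r within {r..})"
    and osl: "\<And>r. r \<in> {0..<t} \<Longrightarrow> inner (x' r - y' r) (x r - y r) \<le> L * (norm (x r - y r))\<^sup>2"
  shows "dist (x t) (y t) \<le> exp (L * t) * dist (x 0) (y 0)"
proof -
  define f where "f r = exp (- (2 * L * r)) * inner (x r - y r) (x r - y r)" for r
  define f' where "f' r = exp (- (2 * L * r)) *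
      (2 * inner (x' r - y' r) (x r - y r) - 2 * L * inner (x r - y r) (x r - y r))" for r
  have "f t \<le> f 0"
  proof (rule right_derivative_nonpos_le[OF t])
    show "continuous_on {0..t} f" unfolding f_def using cont by (intro continuous_intros)
  next
    fix r assume r: "r \<in> {0..<t}"
    have "((\<lambda>r. x r - y r) has_vector_derivative x' r - y' r) (at r within {r..})"
      using dx[OF r] dy[OF r] by (rule has_vector_derivative_diff)
    then have dz: "((\<lambda>r. x r - y r) has_derivative (\<lambda>h. h *\<^sub>R (x' r - y' r))) (at r within {r..})"
      by (simp add: has_vector_derivative_def)
    have dsq: "((\<lambda>r. inner (x r - y r) (x r - y r)) has_real_derivative
        2 * inner (x' r - y' r) (x r - y r)) (at r within {r..})"
      unfolding has_field_derivative_def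
      by (rule has_derivative_eq_rhs[OF has_derivative_inner[OF dz dz]])
        (auto simp: fun_eq_iff inner_commute algebra_simps)
    have "((\<lambda>r. exp (- (2 * L * r))) has_real_derivative exp (- (2 * L * r)) * (- (2 * L)))
        (at r within {r..})"
      by (auto intro!: derivative_eq_intros)
    then show "(f has_real_derivative f' r) (at r within {r..})"
      unfolding f_def f'_def by (rule DERIV_cong[OF DERIV_mult[OF _ dsq]]) (simp add: algebra_simps)
  next
    fix r assume "r \<in> {0..<t}"
    then show "f' r \<le> 0"
      using osl by (simp add: f'_def power2_norm_eq_inner mult_nonneg_nonpos)
  qed
  then have "(dist (x t) (y t))\<^sup>2 \<le> exp (2 * L * t) * (dist (x 0) (y 0))\<^sup>2"
    by (simp add: f_def dist_norm power2_norm_eq_inner exp_minus field_simps)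
  also have "\<dots> = (exp (L * t) * dist (x 0) (y 0))\<^sup>2"
    by (simp add: power_mult_distrib power2_eq_square exp_add[symmetric])
  finally show ?thesis by (rule power2_le_imp_le) simp
qed

lemma dist_le_of_right_derivative_bound:
  fixes x :: "real \<Rightarrow> 'a::real_normed_vector"
  assumes "s \<le> t" and "continuous_on {s..t} x"
    and "\<And>r. r \<in> {s..<t} \<Longrightarrow> (x has_vector_derivative x' r) (at r within {r..})"
    and "\<And>r. r \<in> {s..<t} \<Longrightarrow> norm (x' r) \<le> B"
  shows "dist (x s) (x t) \<le> B * (t - s)"
proof -
  define f where "f r = dist (x s) (x r) - B * (r - s)" for r
  have "f t \<le> f s"
  proof (rule right_dini_le[OF assms(1)])
    show "continuous_on {s..t} f" unfolding f_def using assms(2) by (intro continuous_intros)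
  next
    fix r e :: real assume r: "r \<in> {s..<t}" and "e > 0"
    obtain d where "d > 0"
      and d: "\<And>y. r < y \<Longrightarrow> y < r + d \<Longrightarrow> norm (x y - x r - (y - r) *\<^sub>R x' r) \<le> e * (y - r)"
      using has_vector_derivative_right_approx[OF assms(3)[OF r] \<open>e > 0\<close>] by auto
    have "f y \<le> f r + e * (y - r)" if y: "r < y" "y < r + d" for y
    proof -
      have "norm ((y - r) *\<^sub>R x' r) \<le> B * (y - r)"
        using assms(4)[OF r] y by (simp add: mult.commute mult_right_mono)
      then have "dist (x r) (x y) \<le> B * (y - r) + e * (y - r)"
        using d[OF y] norm_triangle_sub[of "x y - x r" "(y - r) *\<^sub>R x' r"]
        by (simp add: dist_norm norm_minus_commute)
      then show ?thesis
        using dist_triangle[of "x s" "x y" "x r"] by (simp add: f_def algebra_simps)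
    qed
    then show "\<exists>d>0. \<forall>y. r < y \<and> y < r + d \<and> y \<le> t \<longrightarrow> f y \<le> f r + e * (y - r)"
      using \<open>d > 0\<close> by blast
  qed
  then show ?thesis by (simp add: f_def)
qed

lemma encl_radius_closest_point_less:
  fixes S :: "'a::euclidean_space set"
  assumes "compact S" and "S \<noteq> {}" and sph: "S \<subseteq> sphere a r"
    and cp: "c \<noteq> closest_point (convex hull S) a"
  shows "encl_radius S (closest_point (convex hull S) a) < encl_radius S c"
proof -
  define H where "H = convex hull S"
  define p where "p = closest_point H a"
  have H: "closed H" "convex H" "H \<noteq> {}"
    using assms(1,2) by (auto simp: H_def compact_convex_hull compact_imp_closed)
  have pH: "p \<in> H" using H by (simp add: p_def closest_point_in_set)
  have obtuse: "inner (a - p) (z - p) \<le> 0" if "z \<in> S" for z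
    using any_closest_point_dot[OF H(2,1) pH, of z a] closest_point_exists(2)[OF H(1,3)] that
    by (simp add: p_def H_def hull_inc)
  have sq: "(dist c' z)\<^sup>2 = r\<^sup>2 - 2 * inner (z - a) (c' - a) + (norm (c' - a))\<^sup>2"
    if "z \<in> S" for z c'
  proof -
    have "norm (z - a) = r" using sph that by (auto simp: dist_norm norm_minus_commute)
    then have "r\<^sup>2 = inner (z - a) (z - a)" by (metis power2_norm_eq_inner)
    moreover have "(dist c' z)\<^sup>2 = inner ((z - a) - (c' - a)) ((z - a) - (c' - a))"
      by (simp add: dist_norm power2_norm_eq_inner inner_diff_left inner_diff_right inner_commute)
    ultimately show ?thesis
      by (simp add: power2_norm_eq_inner inner_diff_left inner_diff_right inner_commute)
  qed
  define Q where "Q = r\<^sup>2 - (norm (p - a))\<^sup>2"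
  have "(dist p z)\<^sup>2 \<le> Q" if "z \<in> S" for z
    using sq[OF that, of p] obtuse[OF that]
    by (simp add: Q_def power2_norm_eq_inner inner_diff_left inner_diff_right inner_commute)
  then have "encl_radius S p \<le> sqrt Q"
    unfolding encl_radius_def using assms(2) by (intro cSUP_least) (auto simp: real_le_rsqrt)
  have "\<exists>z\<in>S. inner (c - a) z \<le> inner (c - a) p"
  proof (rule ccontr)
    assume "\<not> ?thesis"
    then have "H \<subseteq> {y. inner (c - a) y > inner (c - a) p}"
      unfolding H_def by (intro hull_minimal) (auto simp: convex_halfspace_gt)
    then show False using pH by auto
  qed
  then obtain z where z: "z \<in> S" "inner (c - a) z \<le> inner (c - a) p" by blast
  have "(dist c z)\<^sup>2 \<ge> Q + (norm (c - p))\<^sup>2"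
    using sq[OF z(1), of c] z(2)
    by (simp add: Q_def power2_norm_eq_inner inner_diff_left inner_diff_right inner_commute
        algebra_simps)
  moreover have "norm (c - p) > 0" using cp by (simp add: p_def H_def)
  ultimately have "sqrt Q < dist c z"
    by (smt (verit) real_less_lsqrt zero_le_dist zero_less_power)
  also have "dist c z \<le> encl_radius S c"
    unfolding encl_radius_def using z(1) assms(1)
    by (intro cSUP_upper bounded_imp_bdd_above compact_imp_bounded compact_continuous_image)
      (auto intro: continuous_intros)
  finally show ?thesis using \<open>encl_radius S p \<le> sqrt Q\<close> by (simp add: p_def H_def)
qed

lemma center_eq_closest_point:
  fixes S :: "'a::euclidean_space set"
  assumes "compact S" and "S \<noteq> {}" and "S \<subseteq> sphere a r"
  shows "center S = closest_point (convex hull S) a"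
  unfolding center_def
proof (rule someI2)
  show "\<forall>c'. encl_radius S (closest_point (convex hull S) a) \<le> encl_radius S c'"
    using encl_radius_closest_point_less[OF assms] by (metis order.order_iff_strict)
next
  fix c assume "\<forall>c'. encl_radius S c \<le> encl_radius S c'"
  then show "c = closest_point (convex hull S) a"
    using encl_radius_closest_point_less[OF assms] by (meson not_le)
qed

lemma ThetaK_eq: "ThetaK K x = K \<inter> sphere x (distK K x)"
  by (auto simp: ThetaK_def sphere_def)

lemma compact_ThetaK: "closed K \<Longrightarrow> compact (ThetaK K x)"
  by (simp add: ThetaK_eq closed_Int_compact)

lemma ThetaK_nonempty:
  fixes K :: "'a::euclidean_space set"
  shows "closed K \<Longrightarrow> K \<noteq> {} \<Longrightarrow> ThetaK K x \<noteq> {}"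
  by (metis (mono_tags, lifting) ThetaK_def distK_def empty_Collect_eq infdist_attains_inf)

lemma distK_pos: "closed K \<Longrightarrow> K \<noteq> {} \<Longrightarrow> x \<notin> K \<Longrightarrow> distK K x > 0"
  by (simp add: distK_def infdist_pos_not_in_closed)

lemma distK_le: "z \<in> K \<Longrightarrow> distK K x \<le> dist x z"
  by (simp add: distK_def infdist_le)

lemma center_ThetaK:
  fixes K :: "'a::euclidean_space set" and x :: 'a
  assumes "closed K" and "K \<noteq> {}"
  defines "c \<equiv> center (ThetaK K x)"
  shows "c \<in> convex hull (ThetaK K x)"
    and "\<And>z. z \<in> convex hull (ThetaK K x) \<Longrightarrow> inner (x - c) (z - c) \<le> 0"
proof -
  define H where "H = convex hull (ThetaK K x)"
  have H: "closed H" "convex H" "H \<noteq> {}"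
    using compact_ThetaK[OF assms(1)] ThetaK_nonempty[OF assms(1,2)]
    by (auto simp: H_def compact_convex_hull compact_imp_closed)
  have "c = closest_point H x"
    unfolding c_def H_def using compact_ThetaK[OF assms(1)] ThetaK_nonempty[OF assms(1,2)]
    by (rule center_eq_closest_point) (auto simp: ThetaK_eq)
  then show "c \<in> convex hull (ThetaK K x)"
    using closest_point_in_set[OF H(1,3)] by (simp add: H_def)
  fix z assume "z \<in> convex hull (ThetaK K x)"
  then show "inner (x - c) (z - c) \<le> 0"
    using any_closest_point_dot[OF H(2,1) closest_point_in_set[OF H(1,3)] _
        closest_point_exists(2)[OF H(1,3)]]
      \<open>c = closest_point H x\<close> by (simp add: H_def)
qed

lemma norm_gradK_le_1:
  fixes K :: "'a::euclidean_space set"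
  assumes "closed K" and "K \<noteq> {}" and "x \<notin> K"
  shows "norm (gradK K x) \<le> 1"
proof -
  have "convex hull (ThetaK K x) \<subseteq> cball x (distK K x)"
    by (intro hull_minimal) (auto simp: ThetaK_def)
  then have "norm (x - center (ThetaK K x)) \<le> distK K x"
    using center_ThetaK(1)[OF assms(1,2)] by (force simp: dist_norm)
  then show ?thesis using distK_pos[OF assms] by (simp add: gradK_def divide_le_eq_1)
qed

lemma gradK_inner_ThetaK_nonneg:
  fixes K :: "'a::euclidean_space set"
  assumes "closed K" and "K \<noteq> {}" and "x \<notin> K" and "z \<in> ThetaK K x"
  shows "inner (gradK K x) (x - z) \<ge> 0"
proof -
  define c where "c = center (ThetaK K x)"
  have "inner (x - c) (z - c) \<le> 0"
    using center_ThetaK(2)[OF assms(1,2)] assms(4) by (simp add: c_def hull_inc)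
  moreover have "inner (x - c) (x - z) = inner (x - c) (x - c) - inner (x - c) (z - c)"
    by (simp add: inner_diff_right algebra_simps)
  ultimately have "inner (x - c) (x - z) \<ge> 0" using inner_ge_zero[of "x - c"] by linarith
  then show ?thesis using distK_pos[OF assms(1-3)] by (simp add: gradK_def c_def)
qed

lemma distK_sq_le:
  fixes K :: "'a::euclidean_space set"
  assumes "closed K" and "K \<noteq> {}"
  shows "(distK K y)\<^sup>2
    \<le> (distK K x)\<^sup>2 + 2 * inner (x - center (ThetaK K x)) (y - x) + (norm (y - x))\<^sup>2"
proof -
  define D where "D = (distK K y)\<^sup>2 - (distK K x)\<^sup>2 - (norm (y - x))\<^sup>2"
  have expand:
    "(dist y z)\<^sup>2 = (norm (x - z))\<^sup>2 + 2 * inner (x - z) (y - x) + (norm (y - x))\<^sup>2" for z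
    by (simp add: dist_norm power2_norm_eq_inner inner_diff_left inner_diff_right inner_commute)
  have "2 * inner (x - z) (y - x) \<ge> D" if "z \<in> ThetaK K x" for z
  proof -
    have "distK K y \<le> dist y z" and "norm (x - z) = distK K x"
      using that distK_le[of z K y] by (auto simp: ThetaK_def dist_norm)
    then have "(distK K y)\<^sup>2 \<le> (dist y z)\<^sup>2" by (simp add: distK_def infdist_nonneg power_mono)
    then show ?thesis using expand[of z] \<open>norm (x - z) = distK K x\<close> by (simp add: D_def)
  qed
  then have "convex hull (ThetaK K x) \<subseteq> {z. inner (y - x) z \<le> inner (y - x) x - D / 2}"
    using convex_halfspace_le[of "y - x" "inner (y - x) x - D / 2"]
    by (intro hull_minimal) (auto simp: inner_diff_left inner_commute field_simps)
  then have "inner (y - x) (center (ThetaK K x)) \<le> inner (y - x) x - D / 2"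
    using center_ThetaK(1)[OF assms] by blast
  then show ?thesis
    by (simp add: D_def inner_diff_left inner_diff_right inner_commute field_simps)
qed

lemma inner_gradK_diff_le:
  fixes K :: "'a::euclidean_space set"
  assumes "closed K" and "K \<noteq> {}" and "\<alpha> > 0" and "distK K x \<ge> \<alpha>" and "distK K y \<ge> \<alpha>"
  shows "inner (gradK K x - gradK K y) (x - y) \<le> (norm (x - y))\<^sup>2 / \<alpha>"
proof -
  define Rx Ry d where "Rx = distK K x" and "Ry = distK K y" and "d = (norm (x - y))\<^sup>2"
  define A B where "A = inner (x - center (ThetaK K x)) (x - y)"
    and "B = inner (y - center (ThetaK K y)) (y - x)"
  have Rx: "Rx \<ge> \<alpha>" and Ry: "Ry \<ge> \<alpha>" using assms by (auto simp: Rx_def Ry_def)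
  have "2 * A \<le> Rx\<^sup>2 - Ry\<^sup>2 + d"
    using distK_sq_le[OF assms(1,2), of y x]
    by (simp add: A_def Rx_def Ry_def d_def inner_diff_right norm_minus_commute)
  then have A: "A / Rx \<le> (Rx\<^sup>2 - Ry\<^sup>2) / (2 * Rx) + d / (2 * Rx)"
    using Rx assms(3) by (simp add: divide_simps)
  have "2 * B \<le> Ry\<^sup>2 - Rx\<^sup>2 + d"
    using distK_sq_le[OF assms(1,2), of x y]
    by (simp add: B_def Rx_def Ry_def d_def inner_diff_right)
  then have B: "B / Ry \<le> (Ry\<^sup>2 - Rx\<^sup>2) / (2 * Ry) + d / (2 * Ry)"
    using Ry assms(3) by (simp add: divide_simps)
  have "(Rx\<^sup>2 - Ry\<^sup>2) / (2 * Rx) + (Ry\<^sup>2 - Rx\<^sup>2) / (2 * Ry)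
      = - (Rx + Ry) * (Rx - Ry)\<^sup>2 / (2 * Rx * Ry)"
    using Rx Ry assms(3) by (simp add: field_simps power2_eq_square)
  also have "\<dots> \<le> 0"
    using Rx Ry assms(3) by (intro divide_nonpos_pos mult_nonpos_nonneg) auto
  finally have "(Rx\<^sup>2 - Ry\<^sup>2) / (2 * Rx) + (Ry\<^sup>2 - Rx\<^sup>2) / (2 * Ry) \<le> 0" .
  moreover have "d / (2 * Rx) \<le> d / (2 * \<alpha>)" and "d / (2 * Ry) \<le> d / (2 * \<alpha>)"
    using Rx Ry assms(3) by (auto simp: d_def intro!: divide_left_mono)
  moreover have "inner (y - center (ThetaK K y)) (x - y) = - B"
    by (simp add: B_def inner_diff_right)
  then have "inner (gradK K x - gradK K y) (x - y) = A / Rx + B / Ry"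
    by (simp add: gradK_def inner_diff_left A_def Rx_def Ry_def)
  ultimately show ?thesis using A B by (simp add: d_def)
qed

lemma gradK_inner_gt_near_ThetaK:
  fixes K :: "'a::euclidean_space set"
  assumes "closed K" and "K \<noteq> {}" and "x \<notin> K" and "c > 0"
  obtains \<eta> where "\<eta> > 0"
    and "\<And>z. z \<in> K \<Longrightarrow> dist x z < distK K x + \<eta> \<Longrightarrow> inner (gradK K x) (x - z) > - c"
proof -
  define v where "v = gradK K x"
  define C where "C = (cball x (distK K x + 1) \<inter> K) \<inter> {z. inner v z \<ge> inner v x + c}"
  have notC: "inner v (x - z) > - c" if "z \<in> K" "dist x z \<le> distK K x + 1" "z \<notin> C" for z
    using that by (auto simp: C_def inner_diff_right)
  show ?thesis
  proof (cases "C = {}")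
    case True
    then show ?thesis using notC by (intro that[of 1]) (auto simp: v_def)
  next
    case False
    have "compact C"
      unfolding C_def by (intro compact_Int_closed compact_cball assms(1) closed_halfspace_ge)
    then have "\<exists>z0\<in>C. \<forall>z\<in>C. dist x z0 \<le> dist x z"
      using False by (intro continuous_attains_inf) (auto intro: continuous_intros)
    then obtain z0 where z0: "z0 \<in> C" and z0_min: "\<forall>z\<in>C. dist x z0 \<le> dist x z" by blast
    have "z0 \<notin> ThetaK K x"
    proof
      assume "z0 \<in> ThetaK K x"
      then have "inner v (x - z0) \<ge> 0"
        unfolding v_def by (rule gradK_inner_ThetaK_nonneg[OF assms(1-3)])
      then show False using z0 assms(4) by (auto simp: C_def inner_diff_right)
    qed
    then have gap: "dist x z0 > distK K x"
      using z0 distK_le[of z0 K x] by (auto simp: C_def ThetaK_def)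
    show ?thesis
    proof (rule that[of "min 1 (dist x z0 - distK K x)"])
      fix z assume "z \<in> K" and "dist x z < distK K x + min 1 (dist x z0 - distK K x)"
      then show "inner (gradK K x) (x - z) > - c"
        using notC z0_min unfolding v_def by force
    qed (use gap in simp)
  qed
qed

lemma dist_add_scaleR_ge:
  fixes x z v :: "'a::real_inner"
  assumes "R \<le> dist x z" and "- (e * R / 2) \<le> inner v (x - z)"
    and "0 < h" and "0 < e" and "e * h < R"
  shows "R - e * h \<le> dist (x + h *\<^sub>R v) z"
proof -
  have "(dist (x + h *\<^sub>R v) z)\<^sup>2 = inner ((x - z) + h *\<^sub>R v) ((x - z) + h *\<^sub>R v)"
    by (simp add: dist_norm power2_norm_eq_inner algebra_simps)
  also have "\<dots> = (dist x z)\<^sup>2 + 2 * h * inner v (x - z) + h * h * inner v v"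
    by (simp add: dist_norm power2_norm_eq_inner inner_add_left inner_add_right inner_commute)
  moreover have "R\<^sup>2 \<le> (dist x z)\<^sup>2"
    using assms(1,5) mult_pos_pos[OF assms(4,3)] by (intro power_mono) auto
  moreover have "2 * h * inner v (x - z) \<ge> - (h * e * R)"
    using mult_left_mono[OF assms(2), of "2 * h"] assms(3) by (simp add: algebra_simps)
  moreover have "h * h * inner v v \<ge> 0" by simp
  moreover have "(R - e * h)\<^sup>2 \<le> R\<^sup>2 - h * e * R"
    using assms(3-5) by (simp add: power2_eq_square algebra_simps mult_right_mono)
  ultimately have "(R - e * h)\<^sup>2 \<le> (dist (x + h *\<^sub>R v) z)\<^sup>2" by linarith
  then show ?thesis by (rule power2_le_imp_le) simp
qed

lemma distK_along_gradK:
  fixes K :: "'a::euclidean_space set"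
  assumes "closed K" and "K \<noteq> {}" and "x \<notin> K" and "e > 0"
  obtains d where "d > 0"
    and "\<And>h. 0 < h \<Longrightarrow> h < d \<Longrightarrow> distK K (x + h *\<^sub>R gradK K x) \<ge> distK K x - e * h"
proof -
  define R v where "R = distK K x" and "v = gradK K x"
  have "R > 0" using distK_pos[OF assms(1-3)] by (simp add: R_def)
  have "norm v \<le> 1" using norm_gradK_le_1[OF assms(1-3)] by (simp add: v_def)
  obtain \<eta> where "\<eta> > 0"
    and near: "\<And>z. z \<in> K \<Longrightarrow> dist x z < R + \<eta> \<Longrightarrow> inner v (x - z) > - (e * R / 2)"
    using gradK_inner_gt_near_ThetaK[OF assms(1-3), of "e * R / 2"] assms(4) \<open>R > 0\<close>
    by (auto simp: R_def v_def)
  show ?thesis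
  proof (rule that[of "min \<eta> (R / e)"])
    show "min \<eta> (R / e) > 0" using \<open>\<eta> > 0\<close> \<open>R > 0\<close> assms(4) by simp
    fix h assume "0 < h" and "h < min \<eta> (R / e)"
    then have "h < \<eta>" and "e * h < R" using assms(4) by (auto simp: field_simps)
    have "R - e * h \<le> dist (x + h *\<^sub>R v) z" if "z \<in> K" for z
    proof (cases "dist x z < R + \<eta>")
      case True
      show ?thesis
        by (rule dist_add_scaleR_ge[OF distK_le[OF that, of x, folded R_def]
              less_imp_le[OF near[OF that True]] \<open>0 < h\<close> assms(4) \<open>e * h < R\<close>])
    next
      case False
      have "dist x z \<le> dist (x + h *\<^sub>R v) z + h * norm v"
        using dist_triangle[of x z "x + h *\<^sub>R v"] \<open>0 < h\<close> by (simp add: dist_norm)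
      moreover have "h * norm v \<le> h" using \<open>norm v \<le> 1\<close> \<open>0 < h\<close> by (simp add: mult_left_le)
      ultimately show ?thesis
        using False \<open>h < \<eta>\<close> mult_pos_pos[OF assms(4) \<open>0 < h\<close>] by linarith
    qed
    moreover obtain z where "z \<in> K" and "distK K (x + h *\<^sub>R v) = dist (x + h *\<^sub>R v) z"
      using infdist_attains_inf[OF assms(1,2)] unfolding distK_def by metis
    ultimately show "distK K (x + h *\<^sub>R gradK K x) \<ge> distK K x - e * h"
      by (simp add: R_def v_def)
  qed
qed

lemma is_flowKD:
  assumes "is_flowK K Phi"
  shows flow_zero: "\<And>x. x \<notin> K \<Longrightarrow> Phi 0 x = x"
    and flow_notin: "\<And>t x. t \<ge> 0 \<Longrightarrow> x \<notin> K \<Longrightarrow> Phi t x \<notin> K"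
    and flow_continuous: "continuous_on ({0..} \<times> (- K)) (\<lambda>(t, x). Phi t x)"
    and flow_right_derivative: "\<And>t x. t \<ge> 0 \<Longrightarrow> x \<notin> K \<Longrightarrow>
        ((\<lambda>s. Phi s x) has_vector_derivative gradK K (Phi t x)) (at t within {t..})"
  using assms by (simp_all add: is_flowK_def)

lemma continuous_on_flow_line:
  assumes "is_flowK K Phi" and "x \<notin> K"
  shows "continuous_on {0..} (\<lambda>s. Phi s x)"
proof -
  have "continuous_on {0..} (\<lambda>s. (\<lambda>(t, x). Phi t x) (s, x))"
    by (rule continuous_on_compose2[OF flow_continuous[OF assms(1)]])
      (use assms(2) in \<open>auto intro!: continuous_intros\<close>)
  then show ?thesis by simp
qed

lemma flow_dist_le:
  fixes K :: "'a::euclidean_space set"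
  assumes "closed K" and "K \<noteq> {}" and fl: "is_flowK K Phi" and x: "x \<notin> K"
    and "0 \<le> s" and "s \<le> t"
  shows "dist (Phi s x) (Phi t x) \<le> t - s"
proof -
  have "dist (Phi s x) (Phi t x) \<le> 1 * (t - s)"
  proof (rule dist_le_of_right_derivative_bound[OF \<open>s \<le> t\<close>])
    show "continuous_on {s..t} (\<lambda>r. Phi r x)"
      using continuous_on_flow_line[OF fl x] \<open>0 \<le> s\<close> by (auto elim: continuous_on_subset)
  next
    fix r assume "r \<in> {s..<t}"
    then have "r \<ge> 0" using \<open>0 \<le> s\<close> by simp
    show "((\<lambda>r. Phi r x) has_vector_derivative gradK K (Phi r x)) (at r within {r..})"
      by (rule flow_right_derivative[OF fl \<open>r \<ge> 0\<close> x])
    show "norm (gradK K (Phi r x)) \<le> 1"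
      by (rule norm_gradK_le_1[OF assms(1,2) flow_notin[OF fl \<open>r \<ge> 0\<close> x]])
  qed
  then show ?thesis by simp
qed

lemma distK_flow_mono:
  fixes K :: "'a::euclidean_space set"
  assumes "closed K" and "K \<noteq> {}" and fl: "is_flowK K Phi" and x: "x \<notin> K" and "0 \<le> t"
  shows "distK K x \<le> distK K (Phi t x)"
proof -
  define f where "f r = - distK K (Phi r x)" for r
  have "f t \<le> f 0"
  proof (rule right_dini_le[OF \<open>0 \<le> t\<close>])
    show "continuous_on {0..t} f" unfolding f_def distK_def
      using continuous_on_subset[OF continuous_on_flow_line[OF fl x], of "{0..t}"]
      by (auto intro!: continuous_intros)
  next
    fix r e :: real assume "r \<in> {0..<t}" and "e > 0"
    then have "r \<ge> 0" by simp
    define a v where "a = Phi r x" and "v = gradK K (Phi r x)"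
    obtain d1 where "d1 > 0"
      and d1: "\<And>y. r < y \<Longrightarrow> y < r + d1 \<Longrightarrow> norm (Phi y x - a - (y - r) *\<^sub>R v) \<le> e / 2 * (y - r)"
      using has_vector_derivative_right_approx[OF flow_right_derivative[OF fl \<open>r \<ge> 0\<close> x],
          of "e / 2"] \<open>e > 0\<close>
      by (auto simp: a_def v_def)
    obtain d2 where "d2 > 0"
      and d2: "\<And>h. 0 < h \<Longrightarrow> h < d2 \<Longrightarrow> distK K (a + h *\<^sub>R v) \<ge> distK K a - e / 2 * h"
      using distK_along_gradK[OF assms(1,2) flow_notin[OF fl \<open>r \<ge> 0\<close> x], of "e / 2"]
        \<open>e > 0\<close> by (auto simp: a_def v_def)
    have "f y \<le> f r + e * (y - r)" if "r < y" "y < r + min d1 d2" for y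
    proof -
      have "distK K (a + (y - r) *\<^sub>R v) \<le> distK K (Phi y x) + dist (a + (y - r) *\<^sub>R v) (Phi y x)"
        unfolding distK_def by (rule infdist_triangle)
      moreover have "dist (a + (y - r) *\<^sub>R v) (Phi y x) \<le> e / 2 * (y - r)"
        using d1[of y] that by (simp add: dist_norm norm_minus_commute algebra_simps)
      moreover have "distK K a - e / 2 * (y - r) \<le> distK K (a + (y - r) *\<^sub>R v)"
        using d2[of "y - r"] that by simp
      ultimately show ?thesis by (simp add: f_def a_def)
    qed
    then show "\<exists>d>0. \<forall>y. r < y \<and> y < r + d \<and> y \<le> t \<longrightarrow> f y \<le> f r + e * (y - r)"
      using \<open>d1 > 0\<close> \<open>d2 > 0\<close> by (intro exI[of _ "min d1 d2"]) auto
  qed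
  then show ?thesis using flow_zero[OF fl x] by (simp add: f_def)
qed

lemma flow_exp_lipschitz:
  fixes K :: "'a::euclidean_space set"
  assumes "closed K" and "K \<noteq> {}" and fl: "is_flowK K Phi" and "\<alpha> > 0"
    and x: "distK K x \<ge> \<alpha>" and y: "distK K y \<ge> \<alpha>" and "0 \<le> t"
  shows "dist (Phi t x) (Phi t y) \<le> exp (t / \<alpha>) * dist x y"
proof -
  have xK: "x \<notin> K" and yK: "y \<notin> K" using x y \<open>\<alpha> > 0\<close> by (auto simp: distK_def)
  have "dist (Phi t x) (Phi t y) \<le> exp (1 / \<alpha> * t) * dist (Phi 0 x) (Phi 0 y)"
  proof (rule dist_le_exp_of_one_sided_lipschitz[OF \<open>0 \<le> t\<close>])
    show "continuous_on {0..t} (\<lambda>r. Phi r x)" "continuous_on {0..t} (\<lambda>r. Phi r y)"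
      using continuous_on_flow_line[OF fl xK] continuous_on_flow_line[OF fl yK]
      by (auto elim: continuous_on_subset)
  next
    fix r assume "r \<in> {0..<t}"
    then have r: "r \<ge> 0" by simp
    show "((\<lambda>r. Phi r x) has_vector_derivative gradK K (Phi r x)) (at r within {r..})"
      "((\<lambda>r. Phi r y) has_vector_derivative gradK K (Phi r y)) (at r within {r..})"
      using flow_right_derivative[OF fl r xK] flow_right_derivative[OF fl r yK] by auto
    show "inner (gradK K (Phi r x) - gradK K (Phi r y)) (Phi r x - Phi r y)
        \<le> 1 / \<alpha> * (norm (Phi r x - Phi r y))\<^sup>2"
      using inner_gradK_diff_le[OF assms(1,2,4)] x y
        distK_flow_mono[OF assms(1,2) fl xK r] distK_flow_mono[OF assms(1,2) fl yK r]
      by simp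
  qed
  then show ?thesis using flow_zero[OF fl xK] flow_zero[OF fl yK] by simp
qed

definition partial_chord_sums :: "(real \<Rightarrow> 'a::metric_space) \<Rightarrow> real \<Rightarrow> real set" where
  "partial_chord_sums g u = {(\<Sum>i<k. dist (g (t i)) (g (t (Suc i)))) | t k.
      t 0 = 0 \<and> t k = u \<and> (\<forall>i<k. t i \<le> t (Suc i))}"

definition partial_length :: "(real \<Rightarrow> 'a::metric_space) \<Rightarrow> real \<Rightarrow> real" where
  "partial_length g u = Sup (partial_chord_sums g u)"

lemma partial_chord_sums_one: "partial_chord_sums g 1 = chord_sums g"
  by (simp add: partial_chord_sums_def chord_sums_def)

lemma partial_length_one: "partial_length g 1 = path_length g"
  by (simp add: partial_length_def path_length_def partial_chord_sums_one)

lemma partition_mono: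
  fixes t :: "nat \<Rightarrow> 'a::order"
  assumes "\<forall>i<k. t i \<le> t (Suc i)" and "i \<le> j" and "j \<le> k"
  shows "t i \<le> t j"
  using assms(2)
proof (induction rule: dec_induct)
  case (step n)
  then show ?case using assms(1,3) by (meson less_le_trans order_trans)
qed simp

lemma partial_chord_sums_extend:
  assumes "S \<in> partial_chord_sums g u" and "u \<le> v"
  shows "S + dist (g u) (g v) \<in> partial_chord_sums g v"
proof -
  obtain t k where S: "S = (\<Sum>i<k. dist (g (t i)) (g (t (Suc i))))"
    and t: "t 0 = 0" "t k = u" "\<forall>i<k. t i \<le> t (Suc i)"
    using assms(1) by (auto simp: partial_chord_sums_def)
  define t' where "t' = t(Suc k := v)"
  have "(\<Sum>i<Suc k. dist (g (t' i)) (g (t' (Suc i)))) = S + dist (g u) (g v)"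
    using t(2) by (simp add: S t'_def)
  moreover have "t' 0 = 0 \<and> t' (Suc k) = v \<and> (\<forall>i<Suc k. t' i \<le> t' (Suc i))"
    using t assms(2) by (auto simp: t'_def less_Suc_eq)
  ultimately show ?thesis
    unfolding partial_chord_sums_def mem_Collect_eq by (intro exI[of _ t'] exI[of _ "Suc k"]) simp
qed

lemma dist_in_partial_chord_sums:
  assumes "0 \<le> u"
  shows "dist (g 0) (g u) \<in> partial_chord_sums g u"
proof -
  define t :: "nat \<Rightarrow> real" where "t i = (if i = 0 then 0 else u)" for i
  have "dist (g 0) (g u) = (\<Sum>i<Suc 0. dist (g (t i)) (g (t (Suc i))))" by (simp add: t_def)
  moreover have "t 0 = 0 \<and> t (Suc 0) = u \<and> (\<forall>i<Suc 0. t i \<le> t (Suc i))"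
    using assms by (simp add: t_def)
  ultimately show ?thesis
    unfolding partial_chord_sums_def mem_Collect_eq by (intro exI[of _ t] exI[of _ "Suc 0"]) simp
qed

lemma partial_chord_sums_le_path_length:
  fixes g :: "real \<Rightarrow> 'a::euclidean_space"
  assumes "bdd_above (chord_sums g)" and "S \<in> partial_chord_sums g u" and "u \<le> 1"
  shows "S \<le> path_length g"
proof -
  have "S + dist (g u) (g 1) \<le> path_length g"
    using partial_chord_sums_extend[OF assms(2,3)] assms(1)
    by (simp add: path_length_def partial_chord_sums_one cSup_upper)
  then show ?thesis using zero_le_dist[of "g u" "g 1"] by linarith
qed

lemma partial_length_add_dist_le:
  fixes g :: "real \<Rightarrow> 'a::euclidean_space"
  assumes "bdd_above (chord_sums g)" and "0 \<le> u" and "u \<le> v" and "v \<le> 1"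
  shows "partial_length g u + dist (g u) (g v) \<le> partial_length g v"
proof -
  have "bdd_above (partial_chord_sums g v)"
    using partial_chord_sums_le_path_length[OF assms(1) _ assms(4)] by (auto simp: bdd_above_def)
  then have "S + dist (g u) (g v) \<le> partial_length g v" if "S \<in> partial_chord_sums g u" for S
    unfolding partial_length_def using partial_chord_sums_extend[OF that assms(3)]
    by (simp add: cSup_upper)
  then have "partial_length g u \<le> partial_length g v - dist (g u) (g v)"
    unfolding partial_length_def using dist_in_partial_chord_sums[OF assms(2)]
    by (intro cSup_least) (auto simp: algebra_simps)
  then show ?thesis by simp
qed

lemma partial_length_nonneg:
  fixes g :: "real \<Rightarrow> 'a::euclidean_space"
  assumes "bdd_above (chord_sums g)" and "0 \<le> u" and "u \<le> 1"
  shows "0 \<le> partial_length g u"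
proof -
  have "bdd_above (partial_chord_sums g u)"
    using partial_chord_sums_le_path_length[OF assms(1) _ assms(3)] by (auto simp: bdd_above_def)
  then have "dist (g 0) (g u) \<le> partial_length g u"
    unfolding partial_length_def using dist_in_partial_chord_sums[OF assms(2), of g]
    by (simp add: cSup_upper)
  then show ?thesis using zero_le_dist order_trans by blast
qed

lemma path_length_le_of_increment_bound:
  fixes p :: "real \<Rightarrow> 'a::euclidean_space"
  assumes "\<And>s t. 0 \<le> s \<Longrightarrow> s \<le> t \<Longrightarrow> t \<le> 1 \<Longrightarrow> dist (p s) (p t) \<le> V t - V s"
  shows "bdd_above (chord_sums p)" and "path_length p \<le> V 1 - V 0"
proof -
  have le: "S \<le> V 1 - V 0" if S_in: "S \<in> chord_sums p" for S
  proof -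
    obtain t k where S: "S = (\<Sum>i<k. dist (p (t i)) (p (t (Suc i))))"
      and t: "t 0 = 0" "t k = 1" "\<forall>i<k. t i \<le> t (Suc i)"
      using S_in by (auto simp: chord_sums_def)
    have "0 \<le> t i" "t i \<le> 1" if "i \<le> k" for i
      using partition_mono[OF t(3), of 0 i] partition_mono[OF t(3), of i k] that t(1,2) by auto
    then have "S \<le> (\<Sum>i<k. V (t (Suc i)) - V (t i))"
      unfolding S using t(3) by (intro sum_mono assms) auto
    also have "\<dots> = V 1 - V 0" using sum_lessThan_telescope[of "\<lambda>i. V (t i)" k] t(1,2) by simp
    finally show ?thesis .
  qed
  then show "bdd_above (chord_sums p)" by (auto simp: bdd_above_def)
  show "path_length p \<le> V 1 - V 0"
    unfolding path_length_def using dist_in_partial_chord_sums[of 1 p] le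
    by (intro cSup_least) (auto simp: partial_chord_sums_one)
qed

lemma increment_bound_glue:
  fixes p :: "real \<Rightarrow> 'a::metric_space"
  assumes "\<And>s t. a \<le> s \<Longrightarrow> s \<le> t \<Longrightarrow> t \<le> b \<Longrightarrow> dist (p s) (p t) \<le> V t - V s"
    and "\<And>s t. b \<le> s \<Longrightarrow> s \<le> t \<Longrightarrow> t \<le> c \<Longrightarrow> dist (p s) (p t) \<le> V t - V s"
    and "a \<le> s" and "s \<le> t" and "t \<le> c"
  shows "dist (p s) (p t) \<le> V t - V s"
proof (cases "t \<le> b \<or> b \<le> s")
  case True
  then show ?thesis using assms by (meson order.trans)
next
  case False
  have "dist (p s) (p t) \<le> dist (p s) (p b) + dist (p b) (p t)" by (rule dist_triangle)
  also have "\<dots> \<le> (V b - V s) + (V t - V b)"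
    using assms False by (intro add_mono) auto
  finally show ?thesis by simp
qed

lemma pushed_path_first: "s \<le> 1/3 \<Longrightarrow> pushed_path Phi T g s = Phi (3 * s * T) (g 0)"
  by (simp add: pushed_path_def)

lemma pushed_path_middle:
  assumes "1/3 \<le> s" and "s \<le> 2/3"
  shows "pushed_path Phi T g s = Phi T (g (3 * s - 1))"
proof (cases "s = 1/3")
  case True
  show ?thesis unfolding True by (simp add: pushed_path_def)
qed (use assms in \<open>simp add: pushed_path_def\<close>)

lemma pushed_path_last:
  assumes "2/3 \<le> s"
  shows "pushed_path Phi T g s = Phi (3 * (1 - s) * T) (g 1)"
proof (cases "s = 2/3")
  case True
  show ?thesis unfolding True by (simp add: pushed_path_def)
qed (use assms in \<open>simp add: pushed_path_def\<close>)

lemma path_pushed_path: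
  assumes fl: "is_flowK K Phi" and "0 \<le> T" and "path g" and "path_image g \<inter> K = {}"
  shows "path (pushed_path Phi T g)"
proof -
  have gK: "g u \<notin> K" if "u \<in> {0..1}" for u
    using assms(4) that unfolding path_image_def by blast
  have "continuous_on {0..1/3} (\<lambda>s. Phi (3 * s * T) (g 0))"
    by (rule continuous_on_compose2[OF continuous_on_flow_line[OF fl gK]])
      (use \<open>0 \<le> T\<close> in \<open>auto intro!: continuous_intros\<close>)
  then have first: "continuous_on {0..1/3} (pushed_path Phi T g)"
    by (rule continuous_on_eq) (simp add: pushed_path_first)
  have "continuous_on {1/3..2/3} (\<lambda>s. g (3 * s - 1))"
    by (rule continuous_on_compose2[OF \<open>path g\<close>[unfolded path_def]])
      (auto intro!: continuous_intros)
  then have "continuous_on {1/3..2/3} (\<lambda>s. (\<lambda>(t, x). Phi t x) (T, g (3 * s - 1)))"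
    by (intro continuous_on_compose2[OF flow_continuous[OF fl]])
      (use \<open>0 \<le> T\<close> gK in \<open>auto intro!: continuous_intros\<close>)
  then have middle: "continuous_on {1/3..2/3} (pushed_path Phi T g)"
    by (rule continuous_on_eq) (simp add: pushed_path_middle)
  have "continuous_on {2/3..1} (\<lambda>s. Phi (3 * (1 - s) * T) (g 1))"
    by (rule continuous_on_compose2[OF continuous_on_flow_line[OF fl gK]])
      (use \<open>0 \<le> T\<close> in \<open>auto intro!: continuous_intros\<close>)
  then have last: "continuous_on {2/3..1} (pushed_path Phi T g)"
    by (rule continuous_on_eq) (simp add: pushed_path_last)
  have "continuous_on ({0..1/3} \<union> {1/3..2/3} \<union> {2/3..1}) (pushed_path Phi T g)"
    by (intro continuous_on_closed_Un first middle last closed_Un closed_atLeastAtMost)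
  moreover have "{0..1} = {0..1/3} \<union> {1/3..2/3} \<union> {2/3..(1::real)}" by auto
  ultimately show ?thesis by (simp add: path_def)
qed

lemma flow_dist_le_partial_length:
  fixes K :: "'a::euclidean_space set"
  assumes "closed K" and "K \<noteq> {}" and "is_flowK K Phi" and "\<alpha> > 0" and "0 \<le> T"
    and "bdd_above (chord_sums g)" and "\<And>w. w \<in> {0..1} \<Longrightarrow> distK K (g w) \<ge> \<alpha>"
    and "0 \<le> u" and "u \<le> v" and "v \<le> 1"
  shows "dist (Phi T (g u)) (Phi T (g v)) \<le> exp (T / \<alpha>) * (partial_length g v - partial_length g u)"
proof -
  have "dist (Phi T (g u)) (Phi T (g v)) \<le> exp (T / \<alpha>) * dist (g u) (g v)"
    using assms by (intro flow_exp_lipschitz) auto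
  also have "\<dots> \<le> exp (T / \<alpha>) * (partial_length g v - partial_length g u)"
    using partial_length_add_dist_le[OF assms(6,8-10)] by simp
  finally show ?thesis .
qed

lemma pushed_path_increment_bound:
  fixes K :: "'a::euclidean_space set"
  assumes "closed K" and "K \<noteq> {}" and fl: "is_flowK K Phi" and "\<alpha> > 0"
    and "rectifiable_path g" and "path_image g \<subseteq> - offset K \<alpha>" and "0 \<le> T"
  obtains V where "\<And>s t. 0 \<le> s \<Longrightarrow> s \<le> t \<Longrightarrow> t \<le> 1 \<Longrightarrow>
      dist (pushed_path Phi T g s) (pushed_path Phi T g t) \<le> V t - V s"
    and "V 1 - V 0 \<le> 2 * T + path_length g * exp (T / \<alpha>)"
proof -
  define p l E where "p = pushed_path Phi T g" and "l = partial_length g" and "E = exp (T / \<alpha>)"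
  \<comment> \<open>slope 3T on the outer thirds, e^(T/alpha) times the arc length of g on the middle
    third; clamping with min and max glues the pieces without case distinctions\<close>
  define V where "V s = 3 * T * min s (1/3) + E * (l (3 * max (1/3) (min s (2/3)) - 1) - l 0)
      + 3 * T * max 0 (s - 2/3)" for s
  have bdd: "bdd_above (chord_sums g)" using assms(5) by (simp add: rectifiable_path_def)
  have far: "distK K (g w) \<ge> \<alpha>" if "w \<in> {0..1}" for w
    using assms(6) that by (force simp: path_image_def offset_def)
  have "g 0 \<notin> K" "g 1 \<notin> K"
    using far[of 0] far[of 1] infdist_zero[of "g 0" K] infdist_zero[of "g 1" K] \<open>\<alpha> > 0\<close>
    by (auto simp: distK_def)
  have first: "dist (p s) (p t) \<le> V t - V s" if "0 \<le> s" "s \<le> t" "t \<le> 1/3" for s t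
    using flow_dist_le[OF assms(1,2) fl \<open>g 0 \<notin> K\<close>, of "3 * s * T" "3 * t * T"] that \<open>0 \<le> T\<close>
      mult_right_mono[of s t T]
    by (simp add: p_def pushed_path_first V_def algebra_simps)
  have middle: "dist (p s) (p t) \<le> V t - V s" if "1/3 \<le> s" "s \<le> t" "t \<le> 2/3" for s t
    using flow_dist_le_partial_length[OF assms(1,2) fl \<open>\<alpha> > 0\<close> \<open>0 \<le> T\<close> bdd far,
        of "3 * s - 1" "3 * t - 1"] that
    by (simp add: p_def pushed_path_middle V_def l_def E_def algebra_simps)
  have last: "dist (p s) (p t) \<le> V t - V s" if "2/3 \<le> s" "s \<le> t" "t \<le> 1" for s t
    using flow_dist_le[OF assms(1,2) fl \<open>g 1 \<notin> K\<close>, of "3 * (1 - t) * T" "3 * (1 - s) * T"]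
      that \<open>0 \<le> T\<close> mult_right_mono[of s t T] mult_right_mono[of t 1 T]
    by (simp add: p_def pushed_path_last V_def dist_commute algebra_simps)
  have "dist (p s) (p t) \<le> V t - V s" if "0 \<le> s" "s \<le> t" "t \<le> 2/3" for s t
    using increment_bound_glue[of 0 "1/3" p V "2/3", OF first middle that] by simp
  then have "dist (p s) (p t) \<le> V t - V s" if "0 \<le> s" "s \<le> t" "t \<le> 1" for s t
    using increment_bound_glue[of 0 "2/3" p V 1, OF _ last that] by simp
  moreover have "V 1 - V 0 \<le> 2 * T + path_length g * E"
    using partial_length_nonneg[OF bdd, of 0] partial_length_one[of g] \<open>0 \<le> T\<close>
    by (simp add: V_def l_def E_def algebra_simps)
  ultimately show ?thesis using that[of V] by (simp add: p_def E_def)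
qed

theorem lemma9p9:
  fixes K :: "'a::euclidean_space set"
    and Phi :: "real \<Rightarrow> 'a \<Rightarrow> 'a"
    and g :: "real \<Rightarrow> 'a"
    and \<alpha> T :: real
  assumes "closed K" and "K \<noteq> {}"
    and "is_flowK K Phi"
    and "\<alpha> > 0"
    and "rectifiable_path g"
    and "path_image g \<subseteq> - offset K \<alpha>"
    and "T \<ge> 0"
  shows "rectifiable_path (pushed_path Phi T g) \<and>
         path_length (pushed_path Phi T g) \<le> 2 * T + path_length g * exp (T / \<alpha>)"
proof -
  obtain V where increment: "\<And>s t. 0 \<le> s \<Longrightarrow> s \<le> t \<Longrightarrow> t \<le> 1 \<Longrightarrow>
      dist (pushed_path Phi T g s) (pushed_path Phi T g t) \<le> V t - V s"
    and total: "V 1 - V 0 \<le> 2 * T + path_length g * exp (T / \<alpha>)"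
    using pushed_path_increment_bound[OF assms] by blast
  have "K \<subseteq> offset K \<alpha>" using \<open>\<alpha> > 0\<close> by (auto simp: offset_def distK_def)
  then have "path_image g \<inter> K = {}" using assms(6) by blast
  then have "path (pushed_path Phi T g)"
    using assms(3,5,7) by (intro path_pushed_path) (auto simp: rectifiable_path_def)
  then show ?thesis
    using path_length_le_of_increment_bound[of "pushed_path Phi T g" V, OF increment] total
    by (auto simp: rectifiable_path_def)
qed

end
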